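(* Let $x_1,\dots,x_n$ be indeterminates, $R=\mathbb R[x_1,\dots,x_n]$, and $f_1,\dots,f_n\in R$. Let $g_1,\dots,g_n$ be the (unique) elements of the fraction field of $R$ such that $\mathfrak p(x)=\sum_{i=1}^n g_i x^{i-1}$ satisfies $\mathfrak p(x_j)=f_j$ for $j=1,\dots,n$. Then all $g_i$ lie in $R$ if and only if $x_i-x_j$ divides $f_i-f_j$ in $R$ for all $i\neq j$. *)

theory Defs
  imports Complex_Main "HOL-Library.Poly_Mapping" "HOL-Computational_Algebra.Fraction_Field"
begin

text \<open>Real multivariate polynomials in the indeterminates indexed by the finite type 'n
  (so n = CARD('n)), represented as finitely supported maps from monomials
  (exponent vectors, finitely supported 'n to nat) to real coefficients.\<close>
type_synonym 'n rpoly = "('n \<Rightarrow>\<^sub>0 nat) \<Rightarrow>\<^sub>0 real"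

definition Var :: "'n \<Rightarrow> 'n rpoly" where
  "Var i = Poly_Mapping.single (Poly_Mapping.single i 1) 1"

definition to_fract :: "'n::{finite,linorder} rpoly \<Rightarrow> 'n rpoly fract" where
  "to_fract p = Fract p 1"

end

theory Submission
  imports Defs "HOL-Computational_Algebra.Polynomial"
begin

text \<open>
  Both conditions are statements about interpolation in one variable over \<open>R\<close>. The \<open>g\<^sub>i\<close> lie
  in \<open>R\<close> iff some \<open>p \<in> R[t]\<close> of degree \<open>< n\<close> satisfies \<open>p(x\<^sub>j) = f\<^sub>j\<close>, because the interpolant
  of degree \<open>< n\<close> through \<open>n\<close> distinct points of the fraction field is unique. Such a \<open>p\<close>
  forces \<open>x\<^sub>i - x\<^sub>j\<close> to divide \<open>f\<^sub>i - f\<^sub>j\<close>, since \<open>x - y\<close> divides \<open>p(x) - p(y)\<close>. Conversely,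
  Newton's construction of the interpolant stays inside \<open>R\<close>: at each step one has to divide
  an element of \<open>R\<close> by \<open>\<Prod>\<^sub>s (x\<^sub>a - x\<^sub>s)\<close>, knowing that each factor divides it. This works
  because the \<open>x\<^sub>a - x\<^sub>s\<close> are pairwise non-associated primes: substituting \<open>x\<^sub>s\<close> for \<open>x\<^sub>a\<close> is
  a ring endomorphism of \<open>R\<close> onto an integral domain whose kernel is \<open>(x\<^sub>a - x\<^sub>s)\<close>.
\<close>

lemma dvd_mult_diff_mult:
  fixes d :: "'a::comm_ring_1"
  assumes "d dvd a - b" "d dvd c - e"
  shows "d dvd a * c - b * e"
proof -
  have "a * c - b * e = a * (c - e) + (a - b) * e"
    by (simp add: algebra_simps)
  then show ?thesis
    using assms by simp
qed

lemma dvd_power_diff_power: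
  fixes d :: "'a::comm_ring_1"
  assumes "d dvd a - b"
  shows "d dvd a ^ n - b ^ n"
  using assms by (simp add: power_diff_sumr2)

lemma dvd_prod_diff_prod:
  fixes d :: "'a::comm_ring_1"
  assumes "\<And>i. i \<in> A \<Longrightarrow> d dvd u i - v i"
  shows "d dvd prod u A - prod v A"
  using assms by (induction A rule: infinite_finite_induct) (auto intro: dvd_mult_diff_mult)

lemma dvd_sum_diff_sum:
  fixes d :: "'a::comm_ring_1"
  assumes "\<And>i. i \<in> A \<Longrightarrow> d dvd u i - v i"
  shows "d dvd sum u A - sum v A"
  using assms by (simp add: dvd_sum flip: sum_subtractf)

lemma prime_elem_dvd_prod_iff:
  fixes p :: "'a::idom"
  assumes "prime_elem p" "finite A"
  shows "p dvd prod f A \<longleftrightarrow> (\<exists>i\<in>A. p dvd f i)"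
  using assms(2)
  by induction (auto simp: prime_elem_dvd_mult_iff[OF assms(1)] prime_elem_not_unit[OF assms(1)])

lemma prod_prime_elems_dvd:
  fixes p :: "'i \<Rightarrow> 'a::idom"
  assumes "finite S"
    and "\<And>i. i \<in> S \<Longrightarrow> prime_elem (p i)"
    and "\<And>i j. i \<in> S \<Longrightarrow> j \<in> S \<Longrightarrow> i \<noteq> j \<Longrightarrow> \<not> p i dvd p j"
    and "\<And>i. i \<in> S \<Longrightarrow> p i dvd x"
  shows "prod p S dvd x"
  using assms
proof (induction S rule: finite_induct)
  case (insert t S)
  then obtain c where c: "x = prod p S * c"
    by blast
  have "\<not> p t dvd prod p S"
    using insert by (auto simp: prime_elem_dvd_prod_iff)
  moreover have "p t dvd prod p S * c"
    using insert.prems c by auto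
  ultimately have "p t dvd c"
    using insert.prems by (auto dest: prime_elem_dvd_multD)
  then show ?case
    using insert.hyps c by (simp add: mult_dvd_mono)
qed simp

lemma diff_dvd_poly_diff:
  fixes x y :: "'a::comm_ring_1"
  shows "x - y dvd poly p x - poly p y"
proof -
  have "poly p x = poly ([:-y, 1:] * synthetic_div p y + [:poly p y:]) x"
    by (simp only: synthetic_div_correct')
  then have "poly p x - poly p y = (x - y) * poly (synthetic_div p y) x"
    by (simp add: algebra_simps)
  then show ?thesis
    by simp
qed

lemma interpolating_poly_exists:
  fixes X f :: "'i \<Rightarrow> 'a::idom"
  assumes "finite S" "S \<noteq> {}"
    and "\<And>i j. i \<in> S \<Longrightarrow> j \<in> S \<Longrightarrow> i \<noteq> j \<Longrightarrow> prime_elem (X i - X j)"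
    and "\<And>i j k. i \<in> S \<Longrightarrow> j \<in> S \<Longrightarrow> k \<in> S \<Longrightarrow> i \<noteq> j \<Longrightarrow> i \<noteq> k \<Longrightarrow> j \<noteq> k \<Longrightarrow>
           \<not> X i - X j dvd X i - X k"
    and "\<And>i j. i \<in> S \<Longrightarrow> j \<in> S \<Longrightarrow> i \<noteq> j \<Longrightarrow> X i - X j dvd f i - f j"
  shows "\<exists>p. degree p < card S \<and> (\<forall>j\<in>S. poly p (X j) = f j)"
  using assms
proof (induction S rule: finite_ne_induct)
  case (singleton a)
  show ?case
    by (rule exI[of _ "[:f a:]"]) simp
next
  case (insert a S)
  have "\<exists>p. degree p < card S \<and> (\<forall>j\<in>S. poly p (X j) = f j)"
    by (rule insert.IH) (simp_all add: insert.prems)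
  then obtain p where deg_p: "degree p < card S" and p: "\<forall>j\<in>S. poly p (X j) = f j"
    by blast
  have factor_dvd: "X a - X s dvd f a - poly p (X a)" if "s \<in> S" for s
  proof -
    have "f a - poly p (X a) = (f a - f s) - (poly p (X a) - poly p (X s))"
      using p that by simp
    then show ?thesis
      using insert that by (metis diff_dvd_poly_diff dvd_diff insertCI)
  qed
  have "(\<Prod>s\<in>S. X a - X s) dvd f a - poly p (X a)"
  proof (rule prod_prime_elems_dvd)
    show "prime_elem (X a - X s)" if "s \<in> S" for s
      using that insert by auto
    show "\<not> X a - X s dvd X a - X t" if "s \<in> S" "t \<in> S" "s \<noteq> t" for s t
      using that insert.hyps by (intro insert.prems(2)) auto
  qed (use \<open>finite S\<close> factor_dvd in auto)
  then obtain c where c: "f a - poly p (X a) = (\<Prod>s\<in>S. X a - X s) * c"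
    by blast
  \<comment> \<open>The Newton correction \<open>c \<cdot> W\<close> vanishes on \<open>S\<close> and repairs the value at \<open>X a\<close>.\<close>
  define W where "W = (\<Prod>s\<in>S. [:- X s, 1:])"
  have "degree (p + smult c W) < card (insert a S)"
  proof -
    have "degree W = card S"
      by (simp add: W_def degree_prod_sum_eq)
    then show ?thesis
      using insert.hyps deg_p degree_add_le_max[of p "smult c W"] degree_smult_le[of c W] by simp
  qed
  moreover have "poly (p + smult c W) (X j) = f j" if "j \<in> insert a S" for j
  proof (cases "j = a")
    case True
    then show ?thesis
      using c by (simp add: W_def poly_prod algebra_simps)
  next
    case False
    then show ?thesis
      using that p insert.hyps by (auto simp: W_def poly_prod)
  qed
  ultimately show ?case
    by blast
qed

definition psubst_monom ::
    "('v \<Rightarrow> ('v \<Rightarrow>\<^sub>0 nat) \<Rightarrow>\<^sub>0 'a::comm_semiring_1) \<Rightarrow> ('v \<Rightarrow>\<^sub>0 nat) \<Rightarrow> ('v \<Rightarrow>\<^sub>0 nat) \<Rightarrow>\<^sub>0 'a" where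
  "psubst_monom \<psi> m = (\<Prod>v\<in>Poly_Mapping.keys m. \<psi> v ^ Poly_Mapping.lookup m v)"

definition psubst ::
    "('v \<Rightarrow> ('v \<Rightarrow>\<^sub>0 nat) \<Rightarrow>\<^sub>0 'a::comm_semiring_1) \<Rightarrow> (('v \<Rightarrow>\<^sub>0 nat) \<Rightarrow>\<^sub>0 'a) \<Rightarrow> ('v \<Rightarrow>\<^sub>0 nat) \<Rightarrow>\<^sub>0 'a" where
  "psubst \<psi> p =
    (\<Sum>m\<in>Poly_Mapping.keys p. Poly_Mapping.single 0 (Poly_Mapping.lookup p m) * psubst_monom \<psi> m)"

lemma psubst_monom_eq:
  assumes "finite V" "Poly_Mapping.keys m \<subseteq> V"
  shows "psubst_monom \<psi> m = (\<Prod>v\<in>V. \<psi> v ^ Poly_Mapping.lookup m v)"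
  unfolding psubst_monom_def
  by (rule prod.mono_neutral_left) (use assms in \<open>auto simp: in_keys_iff\<close>)

lemma psubst_eq:
  assumes "finite M" "Poly_Mapping.keys p \<subseteq> M"
  shows "psubst \<psi> p = (\<Sum>m\<in>M. Poly_Mapping.single 0 (Poly_Mapping.lookup p m) * psubst_monom \<psi> m)"
  unfolding psubst_def
  by (rule sum.mono_neutral_left) (use assms in \<open>auto simp: in_keys_iff\<close>)

lemma psubst_monom_0 [simp]: "psubst_monom \<psi> 0 = 1"
  by (simp add: psubst_monom_def)

lemma psubst_monom_add: "psubst_monom \<psi> (m + n) = psubst_monom \<psi> m * psubst_monom \<psi> n"
proof -
  let ?V = "Poly_Mapping.keys m \<union> Poly_Mapping.keys n"
  have "Poly_Mapping.keys (m + n) \<subseteq> ?V"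
    by (rule keys_add)
  then show ?thesis
    by (simp add: psubst_monom_eq[of ?V] lookup_add power_add prod.distrib)
qed

lemma psubst_0 [simp]: "psubst \<psi> 0 = 0"
  by (simp add: psubst_def)

lemma psubst_single [simp]:
  "psubst \<psi> (Poly_Mapping.single m c) = Poly_Mapping.single 0 c * psubst_monom \<psi> m"
  by (simp add: psubst_eq[of "{m}"])

lemma psubst_add [simp]: "psubst \<psi> (p + q) = psubst \<psi> p + psubst \<psi> q"
proof -
  let ?M = "Poly_Mapping.keys p \<union> Poly_Mapping.keys q"
  have "Poly_Mapping.keys (p + q) \<subseteq> ?M"
    by (rule keys_add)
  then show ?thesis
    by (simp add: psubst_eq[of ?M] lookup_add single_add distrib_right sum.distrib)
qed

lemma psubst_sum [simp]: "psubst \<psi> (\<Sum>i\<in>A. p i) = (\<Sum>i\<in>A. psubst \<psi> (p i))"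
  by (induction A rule: infinite_finite_induct) auto

lemma sum_single_lookup:
  "(\<Sum>m\<in>Poly_Mapping.keys p. Poly_Mapping.single m (Poly_Mapping.lookup p m)) = p"
  by (rule poly_mapping_eqI) (simp add: lookup_sum lookup_single when_def in_keys_iff)

lemma psubst_mult [simp]: "psubst \<psi> (p * q) = psubst \<psi> p * psubst \<psi> q"
proof -
  let ?c = "Poly_Mapping.lookup p" and ?d = "Poly_Mapping.lookup q"
  have "p * q = (\<Sum>m\<in>Poly_Mapping.keys p. \<Sum>n\<in>Poly_Mapping.keys q.
      Poly_Mapping.single (m + n) (?c m * ?d n))"
    by (subst (1 2) sum_single_lookup[symmetric]) (simp add: sum_product mult_single)
  then have "psubst \<psi> (p * q) = (\<Sum>m\<in>Poly_Mapping.keys p. \<Sum>n\<in>Poly_Mapping.keys q.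
      (Poly_Mapping.single 0 (?c m) * psubst_monom \<psi> m) * (Poly_Mapping.single 0 (?d n) * psubst_monom \<psi> n))"
    by (simp add: psubst_monom_add mult_single[of 0 _ 0, simplified, symmetric] ac_simps)
  then show ?thesis
    by (simp add: psubst_def sum_product)
qed

lemma psubst_1 [simp]: "psubst \<psi> 1 = 1"
  using psubst_single[of \<psi> 0 1] by simp

lemma psubst_diff [simp]:
  "psubst \<psi> (p - q) = psubst \<psi> p - psubst \<psi> (q :: ('v \<Rightarrow>\<^sub>0 nat) \<Rightarrow>\<^sub>0 'a::comm_ring_1)"
  using psubst_add[of \<psi> "p - q" q] by (simp add: algebra_simps)

lemma dvd_psubst_diff_psubst:
  fixes d :: "('v \<Rightarrow>\<^sub>0 nat) \<Rightarrow>\<^sub>0 'a::comm_ring_1"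
  assumes "\<And>v. d dvd \<psi> v - \<phi> v"
  shows "d dvd psubst \<psi> p - psubst \<phi> p"
  unfolding psubst_def psubst_monom_def
  by (intro dvd_sum_diff_sum dvd_mult_diff_mult dvd_prod_diff_prod dvd_power_diff_power assms) simp

lemma Var_eq_iff [simp]: "Var v = Var w \<longleftrightarrow> v = w"
  by (metis Var_def lookup_single_eq lookup_single_not_eq one_neq_zero zero_neq_one)

lemma Var_power: "Var v ^ k = Poly_Mapping.single (Poly_Mapping.single v k) 1"
  by (induction k) (simp_all add: Var_def mult_single add.commute flip: single_add)

lemma psubst_Var [simp]: "psubst \<psi> (Var v) = \<psi> v"
  by (simp add: Var_def psubst_monom_def)

lemma psubst_monom_Var: "psubst_monom Var m = Poly_Mapping.single m 1"
proof -
  have "(\<Prod>v\<in>A. Poly_Mapping.single (Poly_Mapping.single v (Poly_Mapping.lookup m v)) (1::real))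
      = Poly_Mapping.single (\<Sum>v\<in>A. Poly_Mapping.single v (Poly_Mapping.lookup m v)) 1"
    if "finite A" for A
    using that by induction (simp_all add: mult_single)
  then show ?thesis
    by (simp add: psubst_monom_def Var_power sum_single_lookup)
qed

lemma psubst_Var_self [simp]: "psubst Var p = p"
  by (simp add: psubst_def psubst_monom_Var mult_single sum_single_lookup)

lemma psubst_Var_upd_eq_0_iff: "psubst (Var(v := Var w)) p = 0 \<longleftrightarrow> Var v - Var w dvd p"
proof
  assume "psubst (Var(v := Var w)) p = 0"
  moreover have "Var v - Var w dvd psubst Var p - psubst (Var(v := Var w)) p"
    by (rule dvd_psubst_diff_psubst) simp
  ultimately show "Var v - Var w dvd p"
    by simp
next
  assume "Var v - Var w dvd p"
  then show "psubst (Var(v := Var w)) p = 0"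
    by (auto elim: dvdE)
qed

lemma prime_elem_Var_diff:
  fixes v w :: "'n::linorder"
  assumes "v \<noteq> w"
  shows "prime_elem (Var v - Var w)"
proof (rule prime_elemI)
  show "Var v - Var w \<noteq> 0"
    using assms by simp
  show "\<not> Var v - Var w dvd 1"
    by (simp flip: psubst_Var_upd_eq_0_iff)
  show "Var v - Var w dvd p \<or> Var v - Var w dvd q" if "Var v - Var w dvd p * q" for p q
    using that by (simp flip: psubst_Var_upd_eq_0_iff)
qed

lemma Var_diff_dvd_Var_diff_iff:
  assumes "u \<noteq> w"
  shows "Var u - Var v dvd Var u - Var w \<longleftrightarrow> v = w"
  using assms by (auto simp flip: psubst_Var_upd_eq_0_iff)

lemma ex_interpolating_poly_Var_iff:
  fixes f :: "'n::{finite,linorder} \<Rightarrow> 'n rpoly"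
  shows "(\<exists>p. degree p < card (UNIV :: 'n set) \<and> (\<forall>j. poly p (Var j) = f j))
    \<longleftrightarrow> (\<forall>i j. i \<noteq> j \<longrightarrow> Var i - Var j dvd f i - f j)"
proof
  assume "\<exists>p. degree p < card (UNIV :: 'n set) \<and> (\<forall>j. poly p (Var j) = f j)"
  then show "\<forall>i j. i \<noteq> j \<longrightarrow> Var i - Var j dvd f i - f j"
    by (metis diff_dvd_poly_diff)
next
  assume "\<forall>i j. i \<noteq> j \<longrightarrow> Var i - Var j dvd f i - f j"
  then show "\<exists>p. degree p < card (UNIV :: 'n set) \<and> (\<forall>j. poly p (Var j) = f j)"
    using interpolating_poly_exists[of UNIV Var f]
    by (simp add: prime_elem_Var_diff Var_diff_dvd_Var_diff_iff)
qed

lemma to_fract_0 [simp]: "to_fract 0 = 0"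
  by (simp add: to_fract_def Zero_fract_def)

lemma to_fract_add [simp]: "to_fract (p + q) = to_fract p + to_fract q"
  by (simp add: to_fract_def)

lemma to_fract_mult [simp]: "to_fract (p * q) = to_fract p * to_fract q"
  by (simp add: to_fract_def)

lemma to_fract_eq_iff [simp]: "to_fract p = to_fract q \<longleftrightarrow> p = q"
  by (simp add: to_fract_def eq_fract)

lemma poly_map_poly_to_fract: "poly (map_poly to_fract p) (to_fract x) = to_fract (poly p x)"
  by (induction p) (simp_all add: map_poly_pCons)

lemma coeffs_in_range_to_fract_iff_ex_interpolating_poly:
  fixes f :: "'n::{finite,linorder} \<Rightarrow> 'n rpoly" and g :: "nat \<Rightarrow> 'n rpoly fract"
  assumes "\<forall>j. (\<Sum>i<card (UNIV :: 'n set). g i * to_fract (Var j) ^ i) = to_fract (f j)"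
  shows "(\<forall>i<card (UNIV :: 'n set). g i \<in> range to_fract)
    \<longleftrightarrow> (\<exists>p. degree p < card (UNIV :: 'n set) \<and> (\<forall>j. poly p (Var j) = f j))"
proof -
  define G where "G = (\<Sum>i<card (UNIV :: 'n set). monom (g i) i)"
  have coeff_G: "coeff G i = (if i < card (UNIV :: 'n set) then g i else 0)" for i
    by (simp add: G_def coeff_sum)
  have poly_G: "poly G (to_fract (Var j)) = to_fract (f j)" for j
    using assms by (simp add: G_def poly_sum poly_monom)
  have deg_G: "degree G < card (UNIV :: 'n set)"
    by (rule degree_lessI) (simp_all add: coeff_G finite_UNIV_card_ge_0)
  show ?thesis
  proof
    assume "\<forall>i<card (UNIV :: 'n set). g i \<in> range to_fract"
    then have g: "to_fract (inv to_fract (g i)) = g i" if "i < card (UNIV :: 'n set)" for i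
      using that by (simp add: f_inv_into_f)
    define P where "P = (\<Sum>i<card (UNIV :: 'n set). monom (inv to_fract (g i)) i)"
    have P_G: "map_poly to_fract P = G"
      by (rule poly_eqI) (simp add: coeff_map_poly coeff_G g P_def coeff_sum)
    have "poly P (Var j) = f j" for j
      using poly_G[of j] by (simp add: poly_map_poly_to_fract flip: P_G)
    moreover have "degree P < card (UNIV :: 'n set)"
      by (rule degree_lessI) (simp_all add: P_def coeff_sum finite_UNIV_card_ge_0)
    ultimately show "\<exists>p. degree p < card (UNIV :: 'n set) \<and> (\<forall>j. poly p (Var j) = f j)"
      by blast
  next
    assume "\<exists>p. degree p < card (UNIV :: 'n set) \<and> (\<forall>j. poly p (Var j) = f j)"
    then obtain p where deg_p: "degree p < card (UNIV :: 'n set)" and p: "\<And>j. poly p (Var j) = f j"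
      by blast
    have "card (range (\<lambda>j. to_fract (Var j :: 'n rpoly))) = card (UNIV :: 'n set)"
      by (rule card_image) (simp add: inj_def)
    then have p_G: "map_poly to_fract p = G"
      using deg_p deg_G map_poly_degree_leq[of to_fract p]
      by (intro poly_eqI_degree[of "range (\<lambda>j. to_fract (Var j))"])
        (auto simp: poly_map_poly_to_fract p poly_G)
    have "g i = to_fract (coeff p i)" if "i < card (UNIV :: 'n set)" for i
      using coeff_G[of i] that by (simp add: coeff_map_poly flip: p_G)
    then show "\<forall>i<card (UNIV :: 'n set). g i \<in> range to_fract"
      by blast
  qed
qed

theorem proposition3p2:
  fixes f :: "'n::{finite,linorder} \<Rightarrow> 'n rpoly"
    and g :: "nat \<Rightarrow> 'n rpoly fract"
  assumes interp: "\<forall>j. (\<Sum>i<card (UNIV :: 'n set). g i * to_fract (Var j) ^ i) = to_fract (f j)"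
  shows "(\<forall>i<card (UNIV :: 'n set). g i \<in> range to_fract)
     \<longleftrightarrow> (\<forall>i j. i \<noteq> j \<longrightarrow> (Var i - Var j) dvd (f i - f j))"
proof -
  have "(\<forall>i<card (UNIV :: 'n set). g i \<in> range to_fract)
      \<longleftrightarrow> (\<exists>p. degree p < card (UNIV :: 'n set) \<and> (\<forall>j. poly p (Var j) = f j))"
    using interp by (rule coeffs_in_range_to_fract_iff_ex_interpolating_poly)
  also have "\<dots> \<longleftrightarrow> (\<forall>i j. i \<noteq> j \<longrightarrow> (Var i - Var j) dvd (f i - f j))"
    by (rule ex_interpolating_poly_Var_iff)
  finally show ?thesis .
qed

end
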